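(* Let $(F,t)\in U$ with $t\neq0$ and suppose $Y=Y_{F,t}$ is smooth and contains no plane. Then $Y$ has no Eckardt point on $\hat C_1\cup\hat C_2$.
   Context: $U=U_0\times\mathbb{A}^1$, where $U_0$ is the space of cubic forms $F(x_0,\dots,x_3)$ such that the curve cut out by $F$ on the quadric $x_0x_3=x_1x_2$ in $\mathbb{P}^3$ is smooth, avoids $[0,0,0,1]$, and is tangent with multiplicity $2$ to the lines $x_0=x_1=0$ and $x_0=x_2=0$. $Y_{F,t}\subset\mathbb{P}^5$ is $x_4^3-F(x_0,\dots,x_3)+x_5(x_0x_3-x_1x_2)+t\,x_0x_5^2=0$. $C_i=(x_0=x_i=x_5=0)\cap(x_4^3=F)$ and $\hat C_i\subset Y$ is the cone over $C_i$ with vertex $p_0=[0,\dots,0,1]$. An Eckardt point of a smooth cubic fourfold $Y$ is a point $p\in Y$ such that $Y\cap T_pY$ is a cone with vertex $p$, where $T_pY$ is the projective tangent hyperplane at $p$. *)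

theory Defs
  imports "HOL-Analysis.Analysis"
begin

text \<open>Points of affine space C^(n+1) (homogeneous coordinates of P^n) are represented
  as functions nat => complex; only the coordinates 0..n are relevant.\<close>

definition nonzero_pt :: "nat \<Rightarrow> (nat \<Rightarrow> complex) \<Rightarrow> bool" where
  "nonzero_pt n x \<longleftrightarrow> (\<exists>i\<le>n. x i \<noteq> 0)"

definition monoms :: "nat \<Rightarrow> nat \<Rightarrow> (nat \<Rightarrow> nat) set" where
  "monoms n d = {e. (\<forall>i\<ge>n. e i = 0) \<and> (\<Sum>i<n. e i) = d}"

definition homog_form :: "nat \<Rightarrow> nat \<Rightarrow> ((nat \<Rightarrow> complex) \<Rightarrow> complex) \<Rightarrow> bool" where
  "homog_form n d F \<longleftrightarrow>
     (\<exists>coef :: (nat \<Rightarrow> nat) \<Rightarrow> complex.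
        \<forall>x. F x = (\<Sum>e\<in>monoms n d. coef e * (\<Prod>i<n. x i ^ e i)))"

definition pd :: "((nat \<Rightarrow> complex) \<Rightarrow> complex) \<Rightarrow> nat \<Rightarrow> (nat \<Rightarrow> complex) \<Rightarrow> complex" where
  "pd G i x = deriv (\<lambda>z. G (x(i := z))) (x i)"

definition Qf :: "(nat \<Rightarrow> complex) \<Rightarrow> complex" where
  "Qf x = x 0 * x 3 - x 1 * x 2"

definition unit_pt :: "nat \<Rightarrow> nat \<Rightarrow> complex" where
  "unit_pt k = (\<lambda>i. if i = k then 1 else 0)"

definition curve_smooth :: "((nat \<Rightarrow> complex) \<Rightarrow> complex) \<Rightarrow> bool" where
  "curve_smooth F \<longleftrightarrow>
     (\<forall>x. nonzero_pt 3 x \<and> Qf x = 0 \<and> F x = 0 \<longrightarrow>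
        (\<forall>a b. (\<forall>i\<le>3. a * pd Qf i x + b * pd F i x = 0) \<longrightarrow> a = 0 \<and> b = 0))"

definition double_root :: "(complex \<Rightarrow> complex \<Rightarrow> complex) \<Rightarrow> bool" where
  "double_root f \<longleftrightarrow>
     (\<exists>a b l1 l2. (a, b) \<noteq> (0, 0) \<and> l1 * a + l2 * b \<noteq> 0 \<and>
        (\<forall>s u. f s u = (b * s - a * u)^2 * (l1 * s + l2 * u)))"

text \<open>The curve is tangent with multiplicity 2 to the line x0 = x1 = 0 (resp. x0 = x2 = 0),
  i.e. the restriction of F to the line (which lies on Q) has a root of multiplicity 2.\<close>
definition U0 :: "((nat \<Rightarrow> complex) \<Rightarrow> complex) set" where
  "U0 = {F. homog_form 4 3 F \<and> curve_smooth F \<and> F (unit_pt 3) \<noteq> 0 \<and>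
            double_root (\<lambda>s u. F ((\<lambda>_. 0)(2 := s, 3 := u))) \<and>
            double_root (\<lambda>s u. F ((\<lambda>_. 0)(1 := s, 3 := u)))}"

definition Yeq :: "((nat \<Rightarrow> complex) \<Rightarrow> complex) \<Rightarrow> complex \<Rightarrow> (nat \<Rightarrow> complex) \<Rightarrow> complex" where
  "Yeq F t x = x 4 ^ 3 - F x + x 5 * (x 0 * x 3 - x 1 * x 2) + t * x 0 * x 5 ^ 2"

definition smooth_hyp :: "nat \<Rightarrow> ((nat \<Rightarrow> complex) \<Rightarrow> complex) \<Rightarrow> bool" where
  "smooth_hyp n G \<longleftrightarrow>
     \<not> (\<exists>x. nonzero_pt n x \<and> G x = 0 \<and> (\<forall>i\<le>n. pd G i x = 0))"

definition contains_plane :: "((nat \<Rightarrow> complex) \<Rightarrow> complex) \<Rightarrow> bool" where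
  "contains_plane G \<longleftrightarrow>
     (\<exists>u v w. (\<forall>a b c. (\<forall>i\<le>5. a * u i + b * v i + c * w i = 0) \<longrightarrow> a = 0 \<and> b = 0 \<and> c = 0) \<and>
              (\<forall>a b c. G (\<lambda>i. a * u i + b * v i + c * w i) = 0))"

text \<open>Eckardt point of the (smooth) cubic fourfold G = 0 in P^5: p lies on Y and
  Y \<inter> T_pY is a cone with vertex p, i.e. every line joining p to a point of Y \<inter> T_pY
  lies in Y \<inter> T_pY (it lies in T_pY automatically).\<close>
definition eckardt :: "((nat \<Rightarrow> complex) \<Rightarrow> complex) \<Rightarrow> (nat \<Rightarrow> complex) \<Rightarrow> bool" where
  "eckardt G p \<longleftrightarrow> nonzero_pt 5 p \<and> G p = 0 \<and>
     (\<forall>q. G q = 0 \<and> (\<Sum>i\<le>5. pd G i p * q i) = 0 \<longrightarrow>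
        (\<forall>a b. G (\<lambda>i. a * p i + b * q i) = 0))"

definition Ccurve :: "((nat \<Rightarrow> complex) \<Rightarrow> complex) \<Rightarrow> nat \<Rightarrow> (nat \<Rightarrow> complex) set" where
  "Ccurve F k = {c. nonzero_pt 5 c \<and> c 0 = 0 \<and> c k = 0 \<and> c 5 = 0 \<and> c 4 ^ 3 = F c}"

definition Chat :: "((nat \<Rightarrow> complex) \<Rightarrow> complex) \<Rightarrow> nat \<Rightarrow> (nat \<Rightarrow> complex) set" where
  "Chat F k = {x. nonzero_pt 5 x \<and>
     (\<exists>a b c. c \<in> Ccurve F k \<and> x = (\<lambda>i. a * unit_pt 5 i + b * c i))}"

end

(* A point p of the cone over C_j (j = 1, 2) satisfies p0 = pj = 0 and p4^3 = F(p), and on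
   x0 = xj = 0 the equation of Y reduces to x4^3 = F = ell1^2 ell2, the factorisation of F on the
   line x0 = xj = 0 given by its double root. If p4 \<noteq> 0, the tangent line at p to the cuspidal
   cubic x4^3 = ell1^2 ell2 meets it again in a point q, and the line pq lies in Y \<inter> T_pY but not
   in Y. If p4 = 0 and pk \<noteq> 0 (k the other index in {1, 2}), the Eckardt property sweeps out a
   plane in Y through p and the vertex. Otherwise F(e3) \<noteq> 0 forces p to be the vertex e5, which
   is not an Eckardt point. *)

theory Submission
  imports Defs "HOL-Computational_Algebra.Fundamental_Theorem_Algebra"
begin

lemma homog_form_cong:
  assumes "homog_form n d F" and "\<And>i. i < n \<Longrightarrow> x i = y i"
  shows "F x = F y"
proof -
  obtain coef where "\<And>x. F x = (\<Sum>e\<in>monoms n d. coef e * (\<Prod>i<n. x i ^ e i))"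
    using assms(1) unfolding homog_form_def by blast
  then show ?thesis using assms(2) by (auto intro!: sum.cong prod.cong)
qed

lemma homog_form_scale:
  assumes "homog_form n d F"
  shows "F (\<lambda>i. c * x i) = c ^ d * F x"
proof -
  obtain coef where F: "\<And>x. F x = (\<Sum>e\<in>monoms n d. coef e * (\<Prod>i<n. x i ^ e i))"
    using assms unfolding homog_form_def by blast
  have "(\<Prod>i<n. (c * x i) ^ e i) = c ^ d * (\<Prod>i<n. x i ^ e i)" if "e \<in> monoms n d" for e
  proof -
    have "(\<Prod>i<n. c ^ e i) = c ^ d"
      using that power_sum[of c e "{..<n}"] by (simp add: monoms_def)
    then show ?thesis by (simp add: power_mult_distrib prod.distrib)
  qed
  then show ?thesis unfolding F by (simp add: sum_distrib_left mult.left_commute)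
qed

lemma pd_eqI:
  assumes "\<And>z. G (x(i := z)) = g z" and "(g has_field_derivative D) (at (x i))"
  shows "pd G i x = D"
proof -
  have "(\<lambda>z. G (x(i := z))) = g" using assms(1) by auto
  then show ?thesis unfolding pd_def using DERIV_imp_deriv[OF assms(2)] by simp
qed

lemma sum_atMost_5: "(\<Sum>i\<le>5. g i) = g 0 + g 1 + g 2 + g 3 + g 4 + g (5::nat)"
  by (simp add: atMost_Suc numeral_eq_Suc add_ac)

lemma Yeq_eq_cone: "x 0 = 0 \<Longrightarrow> x 1 * x 2 = 0 \<Longrightarrow> Yeq F t x = x 4 ^ 3 - F x"
  by (simp add: Yeq_def)

lemma pd_Yeq_4:
  assumes "homog_form 4 d F"
  shows "pd (Yeq F t) 4 x = 3 * x 4 ^ 2"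
proof (rule pd_eqI)
  fix z
  have "F (x(4 := z)) = F x" by (rule homog_form_cong[OF assms]) auto
  then show "Yeq F t (x(4 := z)) = z ^ 3 - F x + x 5 * (x 0 * x 3 - x 1 * x 2) + t * x 0 * x 5 ^ 2"
    by (simp add: Yeq_def)
qed (auto intro!: derivative_eq_intros)

lemma pd_Yeq_5:
  assumes "homog_form 4 d F"
  shows "pd (Yeq F t) 5 x = x 0 * x 3 - x 1 * x 2 + 2 * t * x 0 * x 5"
proof (rule pd_eqI)
  fix z
  have "F (x(5 := z)) = F x" by (rule homog_form_cong[OF assms]) auto
  then show "Yeq F t (x(5 := z)) = x 4 ^ 3 - F x + z * (x 0 * x 3 - x 1 * x 2) + t * x 0 * z ^ 2"
    by (simp add: Yeq_def)
qed (auto intro!: derivative_eq_intros simp: algebra_simps)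

text \<open>On a line through the vertex inside the hyperplane x0 = 0 the equation of Y is affine in
  x5 with slope - x1 x2, so such a line is not contained in Y when x1 x2 \<noteq> 0.\<close>
lemma vertex_not_eckardt:
  assumes homF: "homog_form 4 3 F" and vertex: "\<And>i. i < 5 \<Longrightarrow> p i = 0" and "p 5 \<noteq> 0"
  shows "\<not> eckardt (Yeq F t) p"
proof
  assume eck: "eckardt (Yeq F t) p"
  have p: "p 0 = 0" "p 1 = 0" "p 2 = 0" "p 3 = 0" "p 4 = 0" using vertex by auto
  have pd12: "pd (Yeq F t) i p = 0" if "i = 1 \<or> i = 2" for i
  proof (rule pd_eqI)
    fix z
    have "F (p(i := z)) = F (\<lambda>n. z * unit_pt i n)"
      by (rule homog_form_cong[OF homF]) (use vertex that in \<open>auto simp: unit_pt_def\<close>)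
    also have "\<dots> = z ^ 3 * F (unit_pt i)" by (rule homog_form_scale[OF homF])
    finally show "Yeq F t (p(i := z)) = - (z ^ 3 * F (unit_pt i))"
      using p that by (auto simp: Yeq_def)
    show "((\<lambda>z. - (z ^ 3 * F (unit_pt i))) has_field_derivative 0) (at (p i))"
      using p that by (auto intro!: derivative_eq_intros)
  qed
  define e where "e = (\<lambda>i::nat. if i = 1 \<or> i = 2 then (1::complex) else 0)"
  define q where "q = e(5 := - F e)"
  have Fq: "F q = F e" "F (\<lambda>i. 1 * p i + 1 * q i) = F e"
    by (rule homog_form_cong[OF homF]; use vertex in \<open>auto simp: q_def\<close>)+
  have "Yeq F t q = 0" using Fq by (simp add: Yeq_def q_def e_def)
  moreover have "(\<Sum>i\<le>5. pd (Yeq F t) i p * q i) = 0"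
    using pd12 by (simp add: sum_atMost_5 pd_Yeq_5[OF homF] p q_def e_def)
  ultimately have "Yeq F t (\<lambda>i. 1 * p i + 1 * q i) = 0"
    using eck unfolding eckardt_def by blast
  moreover have "Yeq F t (\<lambda>i. 1 * p i + 1 * q i) = - p 5"
    using Fq p by (simp add: Yeq_def q_def e_def)
  ultimately show False using \<open>p 5 \<noteq> 0\<close> by simp
qed

text \<open>The plane is spanned by p, the vertex e5 and a point q of the cone x4^3 = F over
  x0 = xk = 0 lying in T_pY. Since p4 = 0 and x5 does not enter the tangency condition at p,
  every point of the line e5 q is again such a point.\<close>
lemma eckardt_imp_contains_plane:
  assumes homF: "homog_form 4 3 F" and jk: "(j = 1 \<and> k = 2) \<or> (j = 2 \<and> k = 1)"
    and p: "p 0 = 0" "p j = 0" "p 4 = 0" and pk: "p k \<noteq> 0"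
    and eck: "eckardt (Yeq F t) p"
  shows "contains_plane (Yeq F t)"
proof -
  define \<alpha> where "\<alpha> = pd (Yeq F t) j p"
  define \<beta> where "\<beta> = pd (Yeq F t) 3 p"
  obtain u v where uv: "\<alpha> * u + \<beta> * v = 0" "u \<noteq> 0 \<or> v \<noteq> 0"
    by (cases "\<alpha> = 0 \<and> \<beta> = 0") (auto intro: that[of 1 0] that[of \<beta> "-\<alpha>"])
  define e where "e = (\<lambda>i. if i = j then u else if i = 3 then v else 0)"
  obtain w where w: "w ^ 3 = F e" using nth_root_exists[of 3 "F e"] by auto
  define q where "q = e(4 := w)"
  have q: "q 0 = 0" "q k = 0" "q 5 = 0" "q j = u" "q 3 = v" "q 4 = w"
    using jk by (auto simp: q_def e_def)
  have "F q = w ^ 3" unfolding w by (rule homog_form_cong[OF homF]) (auto simp: q_def)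
  have line: "Yeq F t (\<lambda>i. a * p i + b * unit_pt 5 i + c * q i) = 0" for a b c
  proof -
    define r where "r i = b * unit_pt 5 i + c * q i" for i
    have r: "r 0 = 0" "r k = 0" "r j = c * u" "r 3 = c * v" "r 4 = c * w" "r 5 = b"
      using jk q by (auto simp: r_def unit_pt_def)
    have "F r = F (\<lambda>i. c * q i)"
      by (rule homog_form_cong[OF homF]) (auto simp: r_def unit_pt_def)
    also have "\<dots> = r 4 ^ 3"
      using homog_form_scale[OF homF] \<open>F q = w ^ 3\<close> r by (simp add: power_mult_distrib)
    finally have "Yeq F t r = 0" using r jk by (subst Yeq_eq_cone) auto
    moreover have "(\<Sum>i\<le>5. pd (Yeq F t) i p * r i) = c * (\<alpha> * u + \<beta> * v)"
      using jk p r by (auto simp: sum_atMost_5 pd_Yeq_4[OF homF] pd_Yeq_5[OF homF]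
          \<alpha>_def \<beta>_def algebra_simps)
    ultimately have "\<forall>a b. Yeq F t (\<lambda>i. a * p i + b * r i) = 0"
      using eck uv(1) unfolding eckardt_def by simp
    then have "Yeq F t (\<lambda>i. a * p i + 1 * r i) = 0" by blast
    then show ?thesis by (simp add: r_def add.assoc)
  qed
  have independent: "a = 0 \<and> b = 0 \<and> c = 0"
    if zero: "\<forall>i\<le>5. a * p i + b * unit_pt 5 i + c * q i = 0" for a b c
  proof -
    have "a * p k = 0" using zero[rule_format, of k] jk q by (auto simp: unit_pt_def)
    then have a: "a = 0" using pk by simp
    have "c * u = 0" using zero[rule_format, of j] jk q p by (auto simp: unit_pt_def)
    moreover have "c * v = 0" using zero[rule_format, of 3] a q by (simp add: unit_pt_def)
    ultimately have c: "c = 0" using uv(2) by auto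
    have "b = 0" using zero[rule_format, of 5] a c by (simp add: unit_pt_def)
    then show ?thesis using a c by simp
  qed
  show ?thesis unfolding contains_plane_def using line independent by blast
qed

locale cuspidal_section =
  fixes F :: "(nat \<Rightarrow> complex) \<Rightarrow> complex" and j k :: nat and A B l1 l2 :: complex
  assumes homF: "homog_form 4 3 F"
    and jk: "(j = 1 \<and> k = 2) \<or> (j = 2 \<and> k = 1)"
    and restriction: "\<And>s u. F ((\<lambda>_. 0)(k := s, 3 := u)) = (B * s - A * u)^2 * (l1 * s + l2 * u)"
    and simple_factor: "l1 * A + l2 * B \<noteq> 0"
begin

definition ell1 :: "(nat \<Rightarrow> complex) \<Rightarrow> complex" where
  "ell1 x = B * x k - A * x 3"

definition ell2 :: "(nat \<Rightarrow> complex) \<Rightarrow> complex" where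
  "ell2 x = l1 * x k + l2 * x 3"

lemma ell_add: "ell1 (\<lambda>i. x i + y i) = ell1 x + ell1 y" "ell2 (\<lambda>i. x i + y i) = ell2 x + ell2 y"
  by (simp_all add: ell1_def ell2_def algebra_simps)

lemma F_on_plane:
  assumes "x 0 = 0" "x j = 0"
  shows "F x = ell1 x ^ 2 * ell2 x"
proof -
  have "F x = F ((\<lambda>_. 0)(k := x k, 3 := x 3))"
    by (rule homog_form_cong[OF homF]) (use assms jk in \<open>auto simp: less_Suc_eq numeral_eq_Suc\<close>)
  then show ?thesis by (simp add: restriction ell1_def ell2_def)
qed

lemma Yeq_on_plane: "x 0 = 0 \<Longrightarrow> x j = 0 \<Longrightarrow> Yeq F t x = x 4 ^ 3 - ell1 x ^ 2 * ell2 x"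
  using jk by (subst Yeq_eq_cone) (auto simp: F_on_plane)

lemma pd_Yeq_k_on_plane:
  assumes "x 0 = 0" "x j = 0"
  shows "pd (Yeq F t) k x = - (2 * B * ell1 x * ell2 x + l1 * ell1 x ^ 2)"
proof (rule pd_eqI)
  fix z
  show "Yeq F t (x(k := z)) = x 4 ^ 3 - (B * z - A * x 3) ^ 2 * (l1 * z + l2 * x 3)"
    using assms jk by (subst Yeq_on_plane) (auto simp: ell1_def ell2_def)
  show "((\<lambda>z. x 4 ^ 3 - (B * z - A * x 3) ^ 2 * (l1 * z + l2 * x 3)) has_field_derivative
      - (2 * B * ell1 x * ell2 x + l1 * ell1 x ^ 2)) (at (x k))"
    unfolding ell1_def ell2_def
    by (rule derivative_eq_intros refl | simp add: algebra_simps power2_eq_square)+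
qed

lemma pd_Yeq_3_on_plane:
  assumes "x 0 = 0" "x j = 0"
  shows "pd (Yeq F t) 3 x = 2 * A * ell1 x * ell2 x - l2 * ell1 x ^ 2"
proof (rule pd_eqI)
  fix z
  show "Yeq F t (x(3 := z)) = x 4 ^ 3 - (B * x k - A * z) ^ 2 * (l1 * x k + l2 * z)"
    using assms jk by (subst Yeq_on_plane) (auto simp: ell1_def ell2_def)
  show "((\<lambda>z. x 4 ^ 3 - (B * x k - A * z) ^ 2 * (l1 * x k + l2 * z)) has_field_derivative
      2 * A * ell1 x * ell2 x - l2 * ell1 x ^ 2) (at (x 3))"
    unfolding ell1_def ell2_def
    by (rule derivative_eq_intros refl | simp add: algebra_simps power2_eq_square)+
qed

lemma tangent_form_on_plane:
  assumes "p 0 = 0" "p j = 0" "q 0 = 0" "q j = 0" "q 5 = 0"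
  shows "(\<Sum>i\<le>5. pd (Yeq F t) i p * q i) =
    3 * p 4 ^ 2 * q 4 - 2 * ell1 p * ell2 p * ell1 q - ell1 p ^ 2 * ell2 q"
proof -
  have "(\<Sum>i\<le>5. pd (Yeq F t) i p * q i) =
      pd (Yeq F t) k p * q k + pd (Yeq F t) 3 p * q 3 + pd (Yeq F t) 4 p * q 4"
    using jk assms by (auto simp: sum_atMost_5)
  then show ?thesis
    using assms by (simp add: pd_Yeq_k_on_plane pd_Yeq_3_on_plane pd_Yeq_4[OF homF]
        ell1_def ell2_def algebra_simps power2_eq_square)
qed

definition plane_pt :: "complex \<Rightarrow> complex \<Rightarrow> complex \<Rightarrow> nat \<Rightarrow> complex" where
  "plane_pt u v w i =
     (if i = k then (l2 * u + A * v) / (l1 * A + l2 * B)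
      else if i = 3 then (B * v - l1 * u) / (l1 * A + l2 * B)
      else if i = 4 then w else 0)"

lemma plane_pt_coords:
  "plane_pt u v w 0 = 0" "plane_pt u v w j = 0" "plane_pt u v w 5 = 0" "plane_pt u v w 4 = w"
  using jk by (auto simp: plane_pt_def)

lemma ell_plane_pt: "ell1 (plane_pt u v w) = u" "ell2 (plane_pt u v w) = v"
proof -
  have "k \<noteq> 3" using jk by auto
  then have "ell1 (plane_pt u v w) = (B * (l2 * u + A * v) - A * (B * v - l1 * u)) / (l1 * A + l2 * B)"
    by (simp add: plane_pt_def ell1_def divide_simps)
  also have "\<dots> = u * (l1 * A + l2 * B) / (l1 * A + l2 * B)" by (simp add: algebra_simps)
  finally show "ell1 (plane_pt u v w) = u" using simple_factor by simp
  have "ell2 (plane_pt u v w) = (l1 * (l2 * u + A * v) + l2 * (B * v - l1 * u)) / (l1 * A + l2 * B)"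
    using \<open>k \<noteq> 3\<close> by (simp add: plane_pt_def ell2_def divide_simps)
  also have "\<dots> = v * (l1 * A + l2 * B) / (l1 * A + l2 * B)" by (simp add: algebra_simps)
  finally show "ell2 (plane_pt u v w) = v" using simple_factor by simp
qed

text \<open>q is the third intersection of the cuspidal cubic with its tangent line at p: along the
  line p + s q the equation of Y restricts to 27 p4^3 s^2, so for p4 \<noteq> 0 this line of
  Y \<inter> T_pY is not contained in Y.\<close>
lemma eckardt_imp_coord4_zero:
  assumes p: "p 0 = 0" "p j = 0" and cone: "p 4 ^ 3 = F p" and eck: "eckardt (Yeq F t) p"
  shows "p 4 = 0"
proof (rule ccontr)
  assume "p 4 \<noteq> 0"
  have cusp: "p 4 ^ 3 = ell1 p ^ 2 * ell2 p" using cone F_on_plane p by simp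
  define q where "q = plane_pt (ell1 p) (-8 * ell2 p) (-2 * p 4)"
  note q = plane_pt_coords[of "ell1 p" "-8 * ell2 p" "-2 * p 4", folded q_def]
    ell_plane_pt[of "ell1 p" "-8 * ell2 p" "-2 * p 4", folded q_def]
  have "Yeq F t q = 0"
    using q cusp by (simp add: Yeq_on_plane algebra_simps)
  moreover have "(\<Sum>i\<le>5. pd (Yeq F t) i p * q i) = 0"
    unfolding tangent_form_on_plane[OF p q(1-3)] using q cusp
    by (simp add: algebra_simps power2_eq_square power3_eq_cube)
  ultimately have "Yeq F t (\<lambda>i. 1 * p i + 1 * q i) = 0"
    using eck unfolding eckardt_def by blast
  moreover have "Yeq F t (\<lambda>i. 1 * p i + 1 * q i) = 27 * p 4 ^ 3"
    using q p cusp by (simp add: Yeq_on_plane ell_add algebra_simps power2_eq_square power3_eq_cube)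
  ultimately show False using \<open>p 4 \<noteq> 0\<close> by simp
qed

end

lemma Chat_memD:
  assumes homF: "homog_form 4 3 F" and "p \<in> Chat F j" and "j \<noteq> 5"
  shows "nonzero_pt 5 p" "p 0 = 0" "p j = 0" "p 4 ^ 3 = F p"
proof -
  obtain a b c where "nonzero_pt 5 p" and "c \<in> Ccurve F j"
    and p: "p = (\<lambda>i. a * unit_pt 5 i + b * c i)"
    using assms(2) unfolding Chat_def by blast
  then have c: "c 0 = 0" "c j = 0" "c 4 ^ 3 = F c" unfolding Ccurve_def by auto
  show "nonzero_pt 5 p" by fact
  show "p 0 = 0" "p j = 0" using c \<open>j \<noteq> 5\<close> by (auto simp: p unit_pt_def)
  have "F p = F (\<lambda>i. b * c i)" by (rule homog_form_cong[OF homF]) (auto simp: p unit_pt_def)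
  also have "\<dots> = b ^ 3 * F c" by (rule homog_form_scale[OF homF])
  finally show "p 4 ^ 3 = F p" using c by (simp add: p unit_pt_def power_mult_distrib)
qed

lemma Chat_eckardt_imp_contains_plane:
  assumes U0: "F \<in> U0" and jk: "(j = 1 \<and> k = 2) \<or> (j = 2 \<and> k = 1)"
    and double: "double_root (\<lambda>s u. F ((\<lambda>_. 0)(k := s, 3 := u)))"
    and pC: "p \<in> Chat F j" and eck: "eckardt (Yeq F t) p"
  shows "contains_plane (Yeq F t)"
proof -
  have homF: "homog_form 4 3 F" and e3: "F (unit_pt 3) \<noteq> 0" using U0 unfolding U0_def by auto
  obtain A B l1 l2 where "l1 * A + l2 * B \<noteq> 0"
    and "\<And>s u. F ((\<lambda>_. 0)(k := s, 3 := u)) = (B * s - A * u)^2 * (l1 * s + l2 * u)"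
    using double unfolding double_root_def by blast
  then interpret cuspidal_section F j k A B l1 l2 using homF jk by unfold_locales
  have "j \<noteq> 5" using jk by auto
  note p = Chat_memD[OF homF pC this]
  have p4: "p 4 = 0" using eckardt_imp_coord4_zero p eck by blast
  show ?thesis
  proof (cases "p k = 0")
    case False
    show ?thesis by (rule eckardt_imp_contains_plane[OF homF jk p(2,3) p4 False eck])
  next
    case True
    have "F p = F (\<lambda>i. p 3 * unit_pt 3 i)"
      by (rule homog_form_cong[OF homF])
        (use jk p True in \<open>auto simp: unit_pt_def less_Suc_eq numeral_eq_Suc\<close>)
    then have "p 3 ^ 3 * F (unit_pt 3) = 0" using homog_form_scale[OF homF] p(4) p4 by simp
    then have "p 3 = 0" using e3 by simp
    then have vertex: "\<And>i. i < 5 \<Longrightarrow> p i = 0"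
      using jk p True p4 by (auto simp: less_Suc_eq numeral_eq_Suc)
    then have "p 5 \<noteq> 0" using p(1) unfolding nonzero_pt_def by (auto simp: le_less)
    then have "\<not> eckardt (Yeq F t) p" using vertex_not_eckardt[OF homF] vertex by blast
    with eck show ?thesis by contradiction
  qed
qed

theorem lemma5p9:
  fixes F :: "(nat \<Rightarrow> complex) \<Rightarrow> complex" and t :: complex
  assumes "F \<in> U0"
    and "t \<noteq> 0"
    and "smooth_hyp 5 (Yeq F t)"
    and "\<not> contains_plane (Yeq F t)"
  shows "\<not> (\<exists>p. p \<in> Chat F 1 \<union> Chat F 2 \<and> eckardt (Yeq F t) p)"
proof
  assume "\<exists>p. p \<in> Chat F 1 \<union> Chat F 2 \<and> eckardt (Yeq F t) p"
  then obtain p where "p \<in> Chat F 1 \<or> p \<in> Chat F 2" and "eckardt (Yeq F t) p" by blast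
  moreover have "double_root (\<lambda>s u. F ((\<lambda>_. 0)(2 := s, 3 := u)))"
    and "double_root (\<lambda>s u. F ((\<lambda>_. 0)(1 := s, 3 := u)))"
    using assms(1) unfolding U0_def by auto
  ultimately have "contains_plane (Yeq F t)"
    using Chat_eckardt_imp_contains_plane[OF assms(1), of 1 2 p t]
      Chat_eckardt_imp_contains_plane[OF assms(1), of 2 1 p t] by auto
  with assms(4) show False by contradiction
qed

end
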